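(* Let $\mathcal{F}$ be a construction scheme over $\omega_1$ of a good type, let $(X,\leq)$ be an $\omega_1$-like partial order and let $\phi:X\to\omega_1$ be a bijection with $\phi(x)<\phi(y)$ whenever $x<y$. For $x\in X$ and $k\in\omega$ let $M^k_x=\{z\in X: z\leq x\text{ and }\phi(z)\in(\phi(x))_k\}$. Then for all $x,y\in X$ and $k\in\omega$: (1) if $\inf(x,y)$ exists and $k>\rho^{\phi[\{x,y,\inf(x,y)\}]}$, then $M^k_x\cap M^k_y=M^k_{\inf(x,y)}$; (2) if $y\leq x$ and $k>\rho(\phi(x),\phi(y))$, then $M^k_y\subseteq M^k_x$; (3) if $y\not\leq x$, then $y\in M^k_y\setminus M^k_x$; (4) if $x$ is successor-like and $k>\rho^{\phi[\mathrm{pred}(x)\cup\{x\}]}$, then $M^k_x\setminus\bigcup_{z\in\mathrm{pred}(x)}M^k_z=\{x\}$; (5) if $x$ and $y$ are incompatible, then $M^k_x\cap M^k_y=\emptyset$.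
   Context: A type is a sequence $\langle m_k,n_{k+1},r_{k+1}\rangle_{k\in\omega}$ of natural numbers with $m_0=1$ and, for all $k$, $n_{k+1}\geq2$, $m_k>r_{k+1}$, $m_{k+1}=r_{k+1}+(m_k-r_{k+1})n_{k+1}$; good if each $r$ equals $r_k$ for infinitely many $k\geq1$. A construction scheme of type $\tau$ over a set of ordinals $Y$ is a family $\mathcal{F}$ of nonempty finite subsets of $Y$, cofinal among finite subsets of $Y$ under $\subseteq$, each of size $m_k$ for some $k$, such that with $\mathcal{F}_k=\{F\in\mathcal{F}:|F|=m_k\}$: (i) for $E,F\in\mathcal{F}_k$, $E\cap F$ is an initial segment of both; (ii) every $F\in\mathcal{F}_{k+1}$ equals $F_0\cup\dots\cup F_{n_{k+1}-1}$ with $F_i\in\mathcal{F}_k$ forming a $\Delta$-system with root $R(F)$, $|R(F)|=r_{k+1}$, $R(F)<F_0\setminus R(F)<\dots<F_{n_{k+1}-1}\setminus R(F)$ ($A<B$ meaning every element of $A$ is below every element of $B$). $\rho(\alpha,\beta)=\min\{k:\exists F\in\mathcal{F}_k\ \{\alpha,\beta\}\subseteq F\}$; for finite $A$, $\rho^A=\max\{\rho(\alpha,\beta):\alpha,\beta\in A\}$; $(\alpha)_k=\{\xi\leq\alpha:\rho(\xi,\alpha)\leq k\}$. A partial order is $\omega_1$-like if it is well-founded, of size $\omega_1$, and every $(-\infty,x)=\{y:y<x\}$ is countable. $\inf(x,y)$ is the greatest lower bound when it exists; $x,y$ are incompatible if no $z$ satisfies $z\leq x$ and $z\leq y$. $\mathrm{pred}(x)$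 is the set of maximal elements of $(-\infty,x)$; $x$ is successor-like if $\mathrm{pred}(x)$ is finite and every $y<x$ satisfies $y\leq z$ for some $z\in\mathrm{pred}(x)$. *)

theory Defs
  imports Main "HOL-Library.Countable_Set"
begin

text \<open>The countable ordinal omega_1 is represented (up to order isomorphism) by a
  well-ordered type that is uncountable and all of whose proper initial segments are countable.\<close>
definition is_omega1 :: "'b::wellorder itself \<Rightarrow> bool" where
  "is_omega1 _ \<longleftrightarrow> \<not> countable (UNIV :: 'b set) \<and> (\<forall>x::'b. countable {y. y < x})"

text \<open>Types <m_k, n_{k+1}, r_{k+1}>: the sequences m, n, r are indexed so that
  n k and r k are only meaningful for k \<ge> 1.\<close>
definition is_type :: "(nat \<Rightarrow> nat) \<Rightarrow> (nat \<Rightarrow> nat) \<Rightarrow> (nat \<Rightarrow> nat) \<Rightarrow> bool" where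
  "is_type m n r \<longleftrightarrow> m 0 = 1 \<and>
     (\<forall>k. n (Suc k) \<ge> 2 \<and> m k > r (Suc k) \<and>
          m (Suc k) = r (Suc k) + (m k - r (Suc k)) * n (Suc k))"

definition good_type :: "(nat \<Rightarrow> nat) \<Rightarrow> (nat \<Rightarrow> nat) \<Rightarrow> (nat \<Rightarrow> nat) \<Rightarrow> bool" where
  "good_type m n r \<longleftrightarrow> is_type m n r \<and> (\<forall>j. infinite {k. k \<ge> 1 \<and> r k = j})"

definition set_less :: "'b::order set \<Rightarrow> 'b set \<Rightarrow> bool" where
  "set_less A B \<longleftrightarrow> (\<forall>a\<in>A. \<forall>b\<in>B. a < b)"

definition initial_segment :: "'b::order set \<Rightarrow> 'b set \<Rightarrow> bool" where
  "initial_segment S A \<longleftrightarrow> S \<subseteq> A \<and> (\<forall>a\<in>S. \<forall>b\<in>A. b < a \<longrightarrow> b \<in> S)"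

definition level :: "'b set set \<Rightarrow> (nat \<Rightarrow> nat) \<Rightarrow> nat \<Rightarrow> 'b set set" where
  "level \<F> m k = {F \<in> \<F>. card F = m k}"

definition construction_scheme ::
  "(nat \<Rightarrow> nat) \<Rightarrow> (nat \<Rightarrow> nat) \<Rightarrow> (nat \<Rightarrow> nat) \<Rightarrow> 'b::order set set \<Rightarrow> bool" where
  "construction_scheme m n r \<F> \<longleftrightarrow>
     is_type m n r \<and>
     (\<forall>F\<in>\<F>. finite F \<and> F \<noteq> {} \<and> (\<exists>k. card F = m k)) \<and>
     (\<forall>A. finite A \<longrightarrow> (\<exists>F\<in>\<F>. A \<subseteq> F)) \<and>
     (\<forall>k. \<forall>E\<in>level \<F> m k. \<forall>F\<in>level \<F> m k.
          initial_segment (E \<inter> F) E \<and> initial_segment (E \<inter> F) F) \<and>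
     (\<forall>k. \<forall>F\<in>level \<F> m (Suc k). \<exists>(Fs :: nat \<Rightarrow> 'b set) R.
          (\<forall>i<n (Suc k). Fs i \<in> level \<F> m k) \<and>
          F = (\<Union>i<n (Suc k). Fs i) \<and>
          (\<forall>i<n (Suc k). \<forall>j<n (Suc k). i \<noteq> j \<longrightarrow> Fs i \<inter> Fs j = R) \<and>
          card R = r (Suc k) \<and>
          set_less R (Fs 0 - R) \<and>
          (\<forall>i. Suc i < n (Suc k) \<longrightarrow> set_less (Fs i - R) (Fs (Suc i) - R)))"

definition rho :: "'b set set \<Rightarrow> (nat \<Rightarrow> nat) \<Rightarrow> 'b \<Rightarrow> 'b \<Rightarrow> nat" where
  "rho \<F> m \<alpha> \<beta> = (LEAST k. \<exists>F\<in>level \<F> m k. {\<alpha>, \<beta>} \<subseteq> F)"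

definition rho_set :: "'b set set \<Rightarrow> (nat \<Rightarrow> nat) \<Rightarrow> 'b set \<Rightarrow> nat" where
  "rho_set \<F> m A = Max {rho \<F> m \<alpha> \<beta> | \<alpha> \<beta>. \<alpha> \<in> A \<and> \<beta> \<in> A}"

definition closure_k :: "'b set set \<Rightarrow> (nat \<Rightarrow> nat) \<Rightarrow> 'b::order \<Rightarrow> nat \<Rightarrow> 'b set" where
  "closure_k \<F> m \<alpha> k = {\<xi>. \<xi> \<le> \<alpha> \<and> rho \<F> m \<xi> \<alpha> \<le> k}"

definition omega1_like :: "'b::wellorder itself \<Rightarrow> 'a::order itself \<Rightarrow> bool" where
  "omega1_like _ _ \<longleftrightarrow> wf {(x::'a, y). x < y} \<and> (\<exists>f :: 'a \<Rightarrow> 'b. bij f) \<and>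
     (\<forall>x::'a. countable {y. y < x})"

definition is_inf :: "'a::order \<Rightarrow> 'a \<Rightarrow> 'a \<Rightarrow> bool" where
  "is_inf x y z \<longleftrightarrow> z \<le> x \<and> z \<le> y \<and> (\<forall>w. w \<le> x \<and> w \<le> y \<longrightarrow> w \<le> z)"

definition incompatible :: "'a::order \<Rightarrow> 'a \<Rightarrow> bool" where
  "incompatible x y \<longleftrightarrow> \<not> (\<exists>z. z \<le> x \<and> z \<le> y)"

definition pred_set :: "'a::order \<Rightarrow> 'a set" where
  "pred_set x = {y. y < x \<and> \<not> (\<exists>w. y < w \<and> w < x)}"

definition successor_like :: "'a::order \<Rightarrow> bool" where
  "successor_like x \<longleftrightarrow> finite (pred_set x) \<and> (\<forall>y. y < x \<longrightarrow> (\<exists>z\<in>pred_set x. y \<le> z))"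

definition Mset :: "'b set set \<Rightarrow> (nat \<Rightarrow> nat) \<Rightarrow> ('a::order \<Rightarrow> 'b::order) \<Rightarrow> nat \<Rightarrow> 'a \<Rightarrow> 'a set" where
  "Mset \<F> m \<phi> k x = {z. z \<le> x \<and> \<phi> z \<in> closure_k \<F> m (\<phi> x) k}"

end

theory Submission
  imports Defs
begin

text \<open>Let F_k denote the members of \<F> of size m k. If \<alpha> \<le> \<beta> and \<rho>(\<alpha>,\<beta>) \<le> k, then
  \<alpha> and \<beta> lie in a common member of F_k, and as members of F_k meet in common initial
  segments, every member of F_k containing \<beta> also contains \<alpha>. So the relation \<rho> \<le> k propagates
  along decreasing chains, and each item of the theorem reduces to moving an element of M^k_x down to a point
  z \<le> x with \<rho>(\<phi> z, \<phi> x) \<le> k. Reading \<rho> \<le> k as lying in a common member of F_k, not just of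
  a lower level, uses that each member of a level lies inside a member of every higher level;
  this holds because the scheme is cofinal over an infinite set.\<close>

lemma construction_scheme_finite:
  "construction_scheme m n r \<F> \<Longrightarrow> G \<in> \<F> \<Longrightarrow> finite G \<and> G \<noteq> {} \<and> (\<exists>k. card G = m k)"
  unfolding construction_scheme_def by (elim conjE) (drule bspec)

lemma construction_scheme_cofinal:
  "construction_scheme m n r \<F> \<Longrightarrow> finite A \<Longrightarrow> \<exists>G\<in>\<F>. A \<subseteq> G"
  unfolding construction_scheme_def by (elim conjE) simp

lemma construction_scheme_initial_segment:
  "construction_scheme m n r \<F> \<Longrightarrow> E \<in> level \<F> m k \<Longrightarrow> G \<in> level \<F> m k \<Longrightarrow>
    initial_segment (E \<inter> G) E"
  unfolding construction_scheme_def by (elim conjE) simp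

lemma construction_scheme_level_Suc_Union:
  fixes \<F> :: "'a::order set set"
  assumes "construction_scheme m n r \<F>" and "G \<in> level \<F> m (Suc k)"
  obtains Fs :: "nat \<Rightarrow> 'a set"
  where "\<forall>i<n (Suc k). Fs i \<in> level \<F> m k" and "G = (\<Union>i<n (Suc k). Fs i)"
  using assms unfolding construction_scheme_def by (elim conjE) meson

lemma is_type_strict_mono: "is_type m n r \<Longrightarrow> strict_mono m"
  unfolding strict_mono_Suc_iff is_type_def
proof (intro allI)
  fix k
  assume "m 0 = 1 \<and> (\<forall>k. 2 \<le> n (Suc k) \<and> r (Suc k) < m k \<and>
            m (Suc k) = r (Suc k) + (m k - r (Suc k)) * n (Suc k))"
  then have "2 \<le> n (Suc k)" "r (Suc k) < m k"
    and m_Suc: "m (Suc k) = r (Suc k) + (m k - r (Suc k)) * n (Suc k)" by auto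
  then have "(m k - r (Suc k)) * 2 \<le> (m k - r (Suc k)) * n (Suc k)" by simp
  then show "m k < m (Suc k)" using \<open>r (Suc k) < m k\<close> m_Suc by linarith
qed

lemma level_descend:
  fixes \<F> :: "'a::order set set"
  assumes cs: "construction_scheme m n r \<F>"
  shows "G \<in> level \<F> m l \<Longrightarrow> \<alpha> \<in> G \<Longrightarrow> k \<le> l \<Longrightarrow> \<exists>E\<in>level \<F> m k. \<alpha> \<in> E"
proof (induction l arbitrary: G)
  case 0
  then show ?case by auto
next
  case (Suc l)
  show ?case
  proof (cases "k = Suc l")
    case True
    with Suc.prems show ?thesis by auto
  next
    case False
    obtain Fs where "\<forall>i<n (Suc l). Fs i \<in> level \<F> m l" "G = (\<Union>i<n (Suc l). Fs i)"
      using construction_scheme_level_Suc_Union[OF cs Suc.prems(1)] .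
    with Suc.prems(2) obtain i where "Fs i \<in> level \<F> m l" "\<alpha> \<in> Fs i" by auto
    with Suc.IH False Suc.prems(3) show ?thesis by auto
  qed
qed

lemma initial_segment_level_le:
  fixes \<F> :: "'a::order set set"
  assumes cs: "construction_scheme m n r \<F>" and E: "E \<in> level \<F> m j"
  shows "G \<in> level \<F> m l \<Longrightarrow> j \<le> l \<Longrightarrow> initial_segment (E \<inter> G) E"
proof (induction l arbitrary: G)
  case 0
  then show ?case using construction_scheme_initial_segment[OF cs E] by auto
next
  case (Suc l)
  show ?case
  proof (cases "j = Suc l")
    case True
    with Suc.prems show ?thesis using construction_scheme_initial_segment[OF cs E] by auto
  next
    case False
    obtain Fs where Fs: "\<forall>i<n (Suc l). Fs i \<in> level \<F> m l" "G = (\<Union>i<n (Suc l). Fs i)"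
      using construction_scheme_level_Suc_Union[OF cs Suc.prems(1)] .
    with Suc.IH False Suc.prems(2) have "\<forall>i<n (Suc l). initial_segment (E \<inter> Fs i) E" by auto
    then show ?thesis using Fs(2) unfolding initial_segment_def by blast
  qed
qed

lemma initial_segment_mem:
  "initial_segment (E \<inter> G) E \<Longrightarrow> p \<in> E \<Longrightarrow> p \<in> G \<Longrightarrow> q \<in> E \<Longrightarrow> q \<le> p \<Longrightarrow> q \<in> G"
  unfolding initial_segment_def by (metis IntD2 IntI order_le_less)

lemma rho_le_of_mem_level:
  "G \<in> level \<F> m k \<Longrightarrow> {\<alpha>, \<beta>} \<subseteq> G \<Longrightarrow> rho \<F> m \<alpha> \<beta> \<le> k"
  unfolding rho_def by (rule Least_le) blast

lemma rho_commute: "rho \<F> m \<alpha> \<beta> = rho \<F> m \<beta> \<alpha>"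
  by (simp add: rho_def insert_commute)

lemma le_rho_set:
  assumes "finite A" "\<alpha> \<in> A" "\<beta> \<in> A"
  shows "rho \<F> m \<alpha> \<beta> \<le> rho_set \<F> m A"
proof -
  have "{rho \<F> m \<alpha> \<beta> | \<alpha> \<beta>. \<alpha> \<in> A \<and> \<beta> \<in> A} = (\<lambda>(\<alpha>, \<beta>). rho \<F> m \<alpha> \<beta>) ` (A \<times> A)"
    by auto
  with assms show ?thesis unfolding rho_set_def by (intro Max_ge) auto
qed

locale infinite_construction_scheme =
  fixes m n r :: "nat \<Rightarrow> nat" and \<F> :: "'a::linorder set set"
  assumes scheme: "construction_scheme m n r \<F>"
    and infinite_UNIV: "infinite (UNIV :: 'a set)"
begin

lemma ex_level_mem: "\<exists>G\<in>level \<F> m k. \<alpha> \<in> G"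
proof -
  obtain B :: "'a set" where B: "finite B" "card B = Suc (m k)"
    using infinite_arbitrarily_large[OF infinite_UNIV] by blast
  then obtain G where G: "G \<in> \<F>" "insert \<alpha> B \<subseteq> G"
    using construction_scheme_cofinal[OF scheme] by (meson finite_insert)
  then obtain l where l: "card G = m l" and "finite G"
    using construction_scheme_finite[OF scheme] by blast
  with G(2) have "card B \<le> card G" by (intro card_mono) auto
  with B l have "m k < m l" by simp
  moreover have "strict_mono m"
    using scheme unfolding construction_scheme_def by (elim conjE) (rule is_type_strict_mono)
  ultimately have "k \<le> l" by (simp add: strict_mono_less)
  moreover have "G \<in> level \<F> m l" using G l by (simp add: level_def)
  ultimately show ?thesis using level_descend[OF scheme, of G l \<alpha> k] G(2) by simp
qed

lemma level_subset_level:
  assumes E: "E \<in> level \<F> m j" and "j \<le> k"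
  shows "\<exists>G\<in>level \<F> m k. E \<subseteq> G"
proof -
  have "finite E" "E \<noteq> {}"
    using construction_scheme_finite[OF scheme] E unfolding level_def by auto
  then have max: "Max E \<in> E" "\<And>\<alpha>. \<alpha> \<in> E \<Longrightarrow> \<alpha> \<le> Max E" by auto
  obtain G where G: "G \<in> level \<F> m k" "Max E \<in> G" using ex_level_mem by blast
  have iseg: "initial_segment (E \<inter> G) E"
    using initial_segment_level_le[OF scheme E G(1) \<open>j \<le> k\<close>] .
  have "E \<subseteq> G"
  proof
    fix \<beta>
    assume "\<beta> \<in> E"
    then show "\<beta> \<in> G" using initial_segment_mem[OF iseg max(1) G(2)] max(2) by simp
  qed
  with G show ?thesis by blast
qed

lemma rho_le_iff: "rho \<F> m \<alpha> \<beta> \<le> k \<longleftrightarrow> (\<exists>G\<in>level \<F> m k. {\<alpha>, \<beta>} \<subseteq> G)"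
proof
  assume le: "rho \<F> m \<alpha> \<beta> \<le> k"
  obtain G where G: "G \<in> \<F>" "{\<alpha>, \<beta>} \<subseteq> G"
    using construction_scheme_cofinal[OF scheme, of "{\<alpha>, \<beta>}"] by auto
  then obtain l where "card G = m l" using construction_scheme_finite[OF scheme] by blast
  with G have "\<exists>G\<in>level \<F> m l. {\<alpha>, \<beta>} \<subseteq> G" by (auto simp: level_def)
  then have "\<exists>E\<in>level \<F> m (rho \<F> m \<alpha> \<beta>). {\<alpha>, \<beta>} \<subseteq> E"
    unfolding rho_def by (rule LeastI)
  then obtain E where E: "E \<in> level \<F> m (rho \<F> m \<alpha> \<beta>)" "{\<alpha>, \<beta>} \<subseteq> E" ..
  obtain G' where "G' \<in> level \<F> m k" "E \<subseteq> G'" using level_subset_level[OF E(1) le] ..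
  with E(2) show "\<exists>G\<in>level \<F> m k. {\<alpha>, \<beta>} \<subseteq> G" by blast
qed (auto intro: rho_le_of_mem_level)

lemma rho_self_le: "rho \<F> m \<alpha> \<alpha> \<le> k"
  using ex_level_mem by (auto intro: rho_le_of_mem_level)

lemma rho_le_trans:
  assumes "rho \<F> m \<alpha> \<beta> \<le> k" "rho \<F> m \<beta> \<gamma> \<le> k" "\<alpha> \<le> \<beta>"
  shows "rho \<F> m \<alpha> \<gamma> \<le> k"
proof -
  obtain E where E: "E \<in> level \<F> m k" "{\<alpha>, \<beta>} \<subseteq> E" using assms(1) rho_le_iff by blast
  obtain G where G: "G \<in> level \<F> m k" "{\<beta>, \<gamma>} \<subseteq> G" using assms(2) rho_le_iff by blast
  have "\<alpha> \<in> G"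
    using initial_segment_mem[OF construction_scheme_initial_segment[OF scheme E(1) G(1)]]
      E(2) G(2) \<open>\<alpha> \<le> \<beta>\<close> by blast
  with G(1) G(2) show ?thesis by (intro rho_le_of_mem_level) auto
qed

end

locale monotone_map_into_scheme = infinite_construction_scheme m n r \<F>
  for m n r :: "nat \<Rightarrow> nat" and \<F> :: "'a::linorder set set" +
  fixes \<phi> :: "'c::order \<Rightarrow> 'a"
  assumes mono_\<phi>: "\<And>x y. x \<le> y \<Longrightarrow> \<phi> x \<le> \<phi> y"
begin

lemma mem_Mset_iff: "z \<in> Mset \<F> m \<phi> k x \<longleftrightarrow> z \<le> x \<and> rho \<F> m (\<phi> z) (\<phi> x) \<le> k"
  using mono_\<phi> by (auto simp: Mset_def closure_k_def)

lemma self_mem_Mset: "x \<in> Mset \<F> m \<phi> k x"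
  by (simp add: mem_Mset_iff rho_self_le)

lemma Mset_subset_Mset:
  assumes "y \<le> x" "rho \<F> m (\<phi> y) (\<phi> x) \<le> k"
  shows "Mset \<F> m \<phi> k y \<subseteq> Mset \<F> m \<phi> k x"
  using assms mono_\<phi> rho_le_trans by (auto simp: mem_Mset_iff intro: order_trans)

lemma mem_Mset_below:
  assumes "w \<in> Mset \<F> m \<phi> k x" "w \<le> z" "rho \<F> m (\<phi> z) (\<phi> x) \<le> k"
  shows "w \<in> Mset \<F> m \<phi> k z"
proof -
  from assms(1) have "w \<le> x" "rho \<F> m (\<phi> w) (\<phi> x) \<le> k" by (auto simp: mem_Mset_iff)
  with assms(3) have "rho \<F> m (\<phi> w) (\<phi> z) \<le> k"
    using rho_le_trans[of "\<phi> w" "\<phi> x" k "\<phi> z"] mono_\<phi> rho_commute by metis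
  with assms(2) show ?thesis by (simp add: mem_Mset_iff)
qed

lemma Mset_Int_is_inf:
  assumes "is_inf x y z" "rho \<F> m (\<phi> z) (\<phi> x) \<le> k" "rho \<F> m (\<phi> z) (\<phi> y) \<le> k"
  shows "Mset \<F> m \<phi> k x \<inter> Mset \<F> m \<phi> k y = Mset \<F> m \<phi> k z"
proof
  show "Mset \<F> m \<phi> k z \<subseteq> Mset \<F> m \<phi> k x \<inter> Mset \<F> m \<phi> k y"
    using assms Mset_subset_Mset by (simp add: is_inf_def)
  show "Mset \<F> m \<phi> k x \<inter> Mset \<F> m \<phi> k y \<subseteq> Mset \<F> m \<phi> k z"
    using assms mem_Mset_below by (auto simp: is_inf_def mem_Mset_iff)
qed

lemma Mset_diff_pred_set:
  assumes "successor_like x" "\<And>z. z \<in> pred_set x \<Longrightarrow> rho \<F> m (\<phi> z) (\<phi> x) \<le> k"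
  shows "Mset \<F> m \<phi> k x - (\<Union>z\<in>pred_set x. Mset \<F> m \<phi> k z) = {x}"
proof
  show "{x} \<subseteq> Mset \<F> m \<phi> k x - (\<Union>z\<in>pred_set x. Mset \<F> m \<phi> k z)"
    using self_mem_Mset by (auto simp: mem_Mset_iff pred_set_def)
  show "Mset \<F> m \<phi> k x - (\<Union>z\<in>pred_set x. Mset \<F> m \<phi> k z) \<subseteq> {x}"
  proof
    fix w
    assume w: "w \<in> Mset \<F> m \<phi> k x - (\<Union>z\<in>pred_set x. Mset \<F> m \<phi> k z)"
    show "w \<in> {x}"
    proof (rule ccontr)
      assume "w \<notin> {x}"
      with w have "w < x" by (auto simp: mem_Mset_iff)
      with assms(1) obtain z where z: "z \<in> pred_set x" "w \<le> z"
        unfolding successor_like_def by blast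
      with w assms(2) have "w \<in> Mset \<F> m \<phi> k z" by (blast intro: mem_Mset_below)
      with z(1) w show False by blast
    qed
  qed
qed

end

lemma Mset_incompatible: "incompatible x y \<Longrightarrow> Mset \<F> m \<phi> k x \<inter> Mset \<F> m \<phi> k y = {}"
  by (auto simp: incompatible_def Mset_def)

theorem mainTheorem11:
  fixes \<F> :: "'b::wellorder set set" and m n r :: "nat \<Rightarrow> nat"
    and \<phi> :: "'a::order \<Rightarrow> 'b"
  assumes omega1: "is_omega1 TYPE('b)"
    and scheme: "construction_scheme m n r \<F>"
    and good: "good_type m n r"
    and olike: "omega1_like TYPE('b) TYPE('a)"
    and bij: "bij \<phi>"
    and mono: "\<And>x y. x < y \<Longrightarrow> \<phi> x < \<phi> y"
  shows
    "(\<forall>x y z k. is_inf x y z \<and> k > rho_set \<F> m (\<phi> ` {x, y, z}) \<longrightarrow>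
        Mset \<F> m \<phi> k x \<inter> Mset \<F> m \<phi> k y = Mset \<F> m \<phi> k z) \<and>
     (\<forall>x y k. y \<le> x \<and> k > rho \<F> m (\<phi> x) (\<phi> y) \<longrightarrow> Mset \<F> m \<phi> k y \<subseteq> Mset \<F> m \<phi> k x) \<and>
     (\<forall>x y k. \<not> y \<le> x \<longrightarrow> y \<in> Mset \<F> m \<phi> k y - Mset \<F> m \<phi> k x) \<and>
     (\<forall>x k. successor_like x \<and> k > rho_set \<F> m (\<phi> ` (pred_set x \<union> {x})) \<longrightarrow>
        Mset \<F> m \<phi> k x - (\<Union>z\<in>pred_set x. Mset \<F> m \<phi> k z) = {x}) \<and>
     (\<forall>x y k. incompatible x y \<longrightarrow> Mset \<F> m \<phi> k x \<inter> Mset \<F> m \<phi> k y = {})"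
proof -
  have "infinite (UNIV :: 'b set)"
    using omega1 countable_finite unfolding is_omega1_def by blast
  moreover have "\<And>x y. x \<le> y \<Longrightarrow> \<phi> x \<le> \<phi> y"
    using mono by (metis order.order_iff_strict)
  ultimately interpret monotone_map_into_scheme m n r \<F> \<phi>
    using scheme by unfold_locales
  show ?thesis
  proof (intro conjI allI impI; (elim conjE)?)
    show "Mset \<F> m \<phi> k x \<inter> Mset \<F> m \<phi> k y = Mset \<F> m \<phi> k z"
      if inf: "is_inf x y z" and k: "rho_set \<F> m (\<phi> ` {x, y, z}) < k" for x y z k
    proof (rule Mset_Int_is_inf[OF inf])
      have "rho \<F> m (\<phi> z) (\<phi> x) \<le> rho_set \<F> m (\<phi> ` {x, y, z})"
        "rho \<F> m (\<phi> z) (\<phi> y) \<le> rho_set \<F> m (\<phi> ` {x, y, z})"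
        by (simp_all add: le_rho_set)
      with k show "rho \<F> m (\<phi> z) (\<phi> x) \<le> k" "rho \<F> m (\<phi> z) (\<phi> y) \<le> k" by simp_all
    qed
    show "Mset \<F> m \<phi> k y \<subseteq> Mset \<F> m \<phi> k x"
      if "y \<le> x" "rho \<F> m (\<phi> x) (\<phi> y) < k" for x y k
      using that by (intro Mset_subset_Mset) (simp_all add: rho_commute)
    show "y \<in> Mset \<F> m \<phi> k y - Mset \<F> m \<phi> k x" if "\<not> y \<le> x" for x y k
      using that self_mem_Mset by (simp add: mem_Mset_iff)
    show "Mset \<F> m \<phi> k x - (\<Union>z\<in>pred_set x. Mset \<F> m \<phi> k z) = {x}"
      if succ: "successor_like x" and k: "rho_set \<F> m (\<phi> ` (pred_set x \<union> {x})) < k" for x k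
    proof (rule Mset_diff_pred_set[OF succ])
      fix z
      assume "z \<in> pred_set x"
      with succ have "rho \<F> m (\<phi> z) (\<phi> x) \<le> rho_set \<F> m (\<phi> ` (pred_set x \<union> {x}))"
        by (intro le_rho_set) (auto simp: successor_like_def)
      with k show "rho \<F> m (\<phi> z) (\<phi> x) \<le> k" by simp
    qed
  qed (rule Mset_incompatible)
qed

end
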